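(* Let $n\ge1$ and work in $\mathfrak{gl}(n)$ with the notation of the context. (i) The elements $e_{kl}=(\mathrm{ad}\,Y)^{k-l}(X^k)$, $0\le k\le n-1$, $-k\le l\le k$, form a basis of $\mathfrak{gl}(n)$, and $\langle e_{kl},e_{k'l'}\rangle=0$ unless $k=k'$ and $l+l'=0$. (ii) For each fixed $l$ with $0\le l\le n-1$, the polynomials $f_{kl}$, $l\le k\le n-1$, form an orthogonal basis (of the space of functions on $\{\alpha_{l+1},\dots,\alpha_n\}$, equivalently of polynomials of degree $<n-l$) with respect to the bilinear form $$\langle f,g\rangle_l=\sum_{i=l+1}^n f(\alpha_i)g(\alpha_i)T_1(\alpha_i)\cdots T_l(\alpha_i)$$ (for $l=0$ the product of $T$'s is $1$ and the sum is over $i=1,\dots,n$). (iii) For $0\le l\le k\le n-1$, up to a nonzero constant factor $f_{kl}(H)$ coincides with $${}_3F_2\left(\begin{matrix}l-k,\ l+k+1,\ \tfrac12(1-n-H)\\ l+1,\ l+1-n\end{matrix}\ \Big|\ 1\right).$$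
   Context: $\mathfrak{gl}(n)$ carries the form $\langle A,B\rangle=\mathrm{tr}(AB)$. Use the principal embedding of $\mathfrak{sl}(2)$: $Y=\sum_{i=1}^{n-1}E_{i+1,i}$, $H=\sum_{i=1}^n(n-2i+1)E_{ii}$, $X=\sum_{i=1}^{n-1}i(n-i)E_{i,i+1}$ (so $[X,Y]=H$, $[H,X]=2X$, $[H,Y]=-2Y$). Set $\alpha_i=n-2i+1$ and $T_i(H)=\frac14(n^2-(H+2i-1)^2)$. For a polynomial $f$, $f(H)=\mathrm{diag}(f(\alpha_1),\dots,f(\alpha_n))$. For $0\le l\le k\le n-1$, the polynomials $f_{kl}$ and $f_{k,-l}$ are the unique polynomials of degree $<n-l$ with $(\mathrm{ad}\,Y)^{k-l}(X^k)=X^lf_{kl}(H)$ and $(\mathrm{ad}\,Y)^{k+l}(X^k)=f_{k,-l}(H)Y^l$. The generalized hypergeometric function is ${}_3F_2\left(\begin{matrix}a_1,a_2,a_3\\ b_1,b_2\end{matrix}\,\big|\,z\right)=\sum_{i\ge0}\frac{(a_1)_i(a_2)_i(a_3)_i}{(b_1)_i(b_2)_i}\frac{z^i}{i!}$ with $(a)_0=1$, $(a)_i=a(a+1)\cdots(a+i-1)$. *)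

theory Defs
  imports Complex_Main "HOL-Computational_Algebra.Polynomial"
begin

text \<open>Matrices in gl(n) are represented as functions nat => nat => real, with
  0-based indices; an n x n matrix has all entries outside {0..<n} x {0..<n} zero.
  Row r / column c (0-based) corresponds to row r+1 / column c+1 of the paper.\<close>

type_synonym rmat = "nat \<Rightarrow> nat \<Rightarrow> real"

definition gl :: "nat \<Rightarrow> rmat set" where
  "gl n = {A. \<forall>i j. n \<le> i \<or> n \<le> j \<longrightarrow> A i j = 0}"

definition mmult :: "nat \<Rightarrow> rmat \<Rightarrow> rmat \<Rightarrow> rmat" where
  "mmult n A B = (\<lambda>i j. \<Sum>k<n. A i k * B k j)"

definition mid :: "nat \<Rightarrow> rmat" where
  "mid n = (\<lambda>i j. if i = j \<and> i < n then 1 else 0)"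

definition mpow :: "nat \<Rightarrow> rmat \<Rightarrow> nat \<Rightarrow> rmat" where
  "mpow n A k = (mmult n A ^^ k) (mid n)"

definition mtrace :: "nat \<Rightarrow> rmat \<Rightarrow> real" where
  "mtrace n A = (\<Sum>i<n. A i i)"

definition trform :: "nat \<Rightarrow> rmat \<Rightarrow> rmat \<Rightarrow> real" where
  "trform n A B = mtrace n (mmult n A B)"

definition ad :: "nat \<Rightarrow> rmat \<Rightarrow> rmat \<Rightarrow> rmat" where
  "ad n A B = (\<lambda>i j. mmult n A B i j - mmult n B A i j)"

definition Ymat :: "nat \<Rightarrow> rmat" where
  "Ymat n = (\<lambda>r c. if r = c + 1 \<and> r < n then 1 else 0)"

definition Xmat :: "nat \<Rightarrow> rmat" where
  "Xmat n = (\<lambda>r c. if c = r + 1 \<and> c < n then real (r + 1) * (real n - real (r + 1)) else 0)"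

text \<open>alpha_i = n - 2i + 1, 1-based i\<close>
definition alpha :: "nat \<Rightarrow> nat \<Rightarrow> real" where
  "alpha n i = real n - 2 * real i + 1"

definition Hmat :: "nat \<Rightarrow> rmat" where
  "Hmat n = (\<lambda>r c. if r = c \<and> r < n then alpha n (r + 1) else 0)"

definition funH :: "nat \<Rightarrow> (real \<Rightarrow> real) \<Rightarrow> rmat" where
  "funH n g = (\<lambda>r c. if r = c \<and> r < n then g (alpha n (r + 1)) else 0)"

definition polyH :: "nat \<Rightarrow> real poly \<Rightarrow> rmat" where
  "polyH n f = funH n (poly f)"

definition Tfun :: "nat \<Rightarrow> nat \<Rightarrow> real \<Rightarrow> real" where
  "Tfun n i x = (real n ^ 2 - (x + 2 * real i - 1) ^ 2) / 4"

definition ekl :: "nat \<Rightarrow> nat \<Rightarrow> int \<Rightarrow> rmat" where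
  "ekl n k l = (ad n (Ymat n) ^^ nat (int k - l)) (mpow n (Xmat n) k)"

definition fkl :: "nat \<Rightarrow> nat \<Rightarrow> nat \<Rightarrow> real poly" where
  "fkl n k l = (THE f. degree f < n - l \<and>
      ekl n k (int l) = mmult n (mpow n (Xmat n) l) (polyH n f))"

definition lform :: "nat \<Rightarrow> nat \<Rightarrow> real poly \<Rightarrow> real poly \<Rightarrow> real" where
  "lform n l f g = (\<Sum>i = l + 1..n. poly f (alpha n i) * poly g (alpha n i) *
                      (\<Prod>j = 1..l. Tfun n j (alpha n i)))"

text \<open>Generalized hypergeometric function 3F2 (as the formal series; all uses below
  are terminating).\<close>
definition hyp3F2 :: "real \<Rightarrow> real \<Rightarrow> real \<Rightarrow> real \<Rightarrow> real \<Rightarrow> real \<Rightarrow> real" where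
  "hyp3F2 a1 a2 a3 b1 b2 z = (\<Sum>i. pochhammer a1 i * pochhammer a2 i * pochhammer a3 i
       / (pochhammer b1 i * pochhammer b2 i) * z ^ i / fact i)"

end

theory Submission
  imports Defs
begin

text \<open>Everything happens on single diagonals. \<open>X^k\<close> lives on the \<open>k\<close>-th superdiagonal, with
  entry \<open>\<Prod>s = 1..k. (i + s) (n - i - s)\<close> in row \<open>i\<close>, and \<open>ad Y\<close> acts on a matrix
  supported on one diagonal as a backward difference in the row index, the boundary terms
  vanishing at the roots of that product. Hence \<open>e_kl\<close> lives on the \<open>l\<close>-th diagonal, where it
  is a weight independent of \<open>k\<close> times a polynomial of degree \<open>k - |l|\<close> in the row index: a
  triangular system, so the \<open>e_kl\<close> form a basis. Invariance of the trace form moves every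
  \<open>ad Y\<close> to one side, and \<open>(ad Y)^(k + k') X^k' = 0\<close> for \<open>k > k'\<close>. For \<open>l \<ge> 0\<close> the
  weight is \<open>T_1 \<cdots> T_l\<close> and the polynomial is \<open>f_kl\<close> in the row coordinate, so
  \<open><f_kl, f_k'l>_l\<close> pairs the diagonal of \<open>e_kl\<close> with \<open>f_k'l\<close>; summation by parts moves the
  \<open>k - l\<close> differences onto \<open>f_k'l\<close>, which has lower degree. Finally, the difference recursion
  for \<open>f_kl\<close> in \<open>k - l\<close> is a contiguous relation of \<open>3F2\<close>.\<close>

section \<open>Finite differences of polynomials\<close>

definition fdiff :: "'a::comm_ring_1 \<Rightarrow> 'a poly \<Rightarrow> 'a poly" where
  "fdiff c p = p \<circ>\<^sub>p [:c, 1:] - p"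

lemma poly_fdiff: "poly (fdiff c p) x = poly p (x + c) - poly p x"
  by (simp add: fdiff_def poly_pcompose algebra_simps)

lemma fdiff_const: "degree p = 0 \<Longrightarrow> fdiff c p = 0"
  by (elim degree_eq_zeroE) (simp add: fdiff_def)

lemma fdiff_pCons: "fdiff c (pCons a p) = pCons 0 (fdiff c p) + smult c (p \<circ>\<^sub>p [:c, 1:])"
  by (simp add: fdiff_def pcompose_pCons algebra_simps)

lemma coeff_pcompose_shift_degree:
  fixes p :: "'a::idom poly"
  shows "coeff (p \<circ>\<^sub>p [:c, 1:]) (degree p) = lead_coeff p"
  using lead_coeff_comp[of "[:c, 1:]" p] by (simp add: degree_pcompose)

lemma degree_coeff_fdiff:
  fixes p :: "'a::idom poly"
  shows "degree (fdiff c p) \<le> degree p - 1 \<and>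
   coeff (fdiff c p) (degree p - 1) = of_nat (degree p) * c * lead_coeff p"
proof (induction p)
  case (pCons a q)
  show ?case
  proof (cases "q = 0")
    case False
    let ?e = "degree q"
    have dp: "degree (pCons a q) = Suc ?e"
      using False by simp
    have "degree (pCons 0 (fdiff c q)) \<le> ?e"
    proof (cases "fdiff c q = 0")
      case False
      then have "?e \<noteq> 0" using fdiff_const by auto
      then have "degree (fdiff c q) < ?e" using pCons.IH[THEN conjunct1] by linarith
      then show ?thesis using False by (simp add: degree_pCons_eq)
    qed simp
    moreover have "coeff (pCons 0 (fdiff c q)) ?e = of_nat ?e * c * lead_coeff q"
      using pCons.IH by (cases ?e) (simp_all add: fdiff_const)
    ultimately show ?thesis
      unfolding fdiff_pCons dp
      by (auto simp: degree_add_le degree_pcompose coeff_pcompose_shift_degree algebra_simps)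
  qed (simp add: fdiff_const)
qed (simp add: fdiff_const)

lemma degree_fdiff_funpow_le:
  fixes p :: "'a::idom poly"
  shows "degree ((fdiff c ^^ j) p) \<le> degree p - j"
proof (induction j)
  case (Suc j)
  then show ?case
    using degree_coeff_fdiff[of c "(fdiff c ^^ j) p", THEN conjunct1] by simp
qed simp

lemma fdiff_funpow_eq_0:
  fixes p :: "'a::idom poly"
  shows "degree p < j \<Longrightarrow> (fdiff c ^^ j) p = 0"
proof (induction j)
  case (Suc j)
  have "degree ((fdiff c ^^ j) p) = 0"
    using degree_fdiff_funpow_le[of j c p] Suc.prems by simp
  then show ?case by (simp add: fdiff_const)
qed simp

lemma degree_fdiff:
  fixes c :: "'a::{idom, ring_char_0}"
  assumes "c \<noteq> 0" "0 < degree p"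
  shows "fdiff c p \<noteq> 0 \<and> degree (fdiff c p) = degree p - 1"
proof -
  have "coeff (fdiff c p) (degree p - 1) \<noteq> 0"
    using degree_coeff_fdiff[of c p] assms by auto
  then show ?thesis
    using degree_coeff_fdiff[of c p] le_degree by fastforce
qed

lemma degree_fdiff_funpow:
  fixes c :: "'a::{idom, ring_char_0}"
  assumes "c \<noteq> 0" "p \<noteq> 0" "j \<le> degree p"
  shows "(fdiff c ^^ j) p \<noteq> 0 \<and> degree ((fdiff c ^^ j) p) = degree p - j"
  using assms(3)
proof (induction j)
  case (Suc j)
  then show ?case
    using degree_fdiff[OF assms(1), of "(fdiff c ^^ j) p"] by simp
qed (use assms in simp)

section \<open>Degree-graded families of polynomials\<close>

lemma graded_family_independent:
  fixes F :: "nat \<Rightarrow> 'a::idom poly"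
  assumes graded: "\<forall>k\<in>{a..<b}. F k \<noteq> 0 \<and> degree (F k) = k - a"
    and "(\<Sum>k\<in>{a..<b}. smult (c k) (F k)) = 0"
  shows "\<forall>k\<in>{a..<b}. c k = 0"
  using assms
proof (induction b)
  case (Suc b)
  show ?case
  proof (cases "a \<le> b")
    case True
    have split: "(\<Sum>k\<in>{a..<Suc b}. smult (c k) (F k)) = (\<Sum>k\<in>{a..<b}. smult (c k) (F k)) + smult (c b) (F b)"
      using True by (rule sum.atLeastLessThan_Suc)
    have "coeff (smult (c k) (F k)) (b - a) = 0" if "k \<in> {a..<b}" for k
      using that Suc.prems(1) by (auto simp: coeff_eq_0)
    then have "coeff (\<Sum>k\<in>{a..<b}. smult (c k) (F k)) (b - a) = 0"
      unfolding coeff_sum by (intro sum.neutral) blast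
    then have "c b * coeff (F b) (b - a) = 0"
      using arg_cong[OF Suc.prems(2)[unfolded split], of "\<lambda>p. coeff p (b - a)"] by simp
    moreover have "coeff (F b) (b - a) \<noteq> 0"
      using Suc.prems(1) True by (metis atLeastLessThan_iff leading_coeff_0_iff less_Suc_eq)
    ultimately have "c b = 0"
      by simp
    with Suc show ?thesis
      using split by (auto simp: less_Suc_eq)
  qed (use Suc in auto)
qed simp

lemma graded_family_spans:
  fixes F :: "nat \<Rightarrow> 'a::field poly"
  assumes graded: "\<forall>k\<in>{a..<b}. F k \<noteq> 0 \<and> degree (F k) = k - a"
    and "degree p < b - a \<or> p = 0"
  shows "\<exists>c. p = (\<Sum>k\<in>{a..<b}. smult (c k) (F k))"
  using assms
proof (induction b arbitrary: p)
  case (Suc b)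
  show ?case
  proof (cases "a \<le> b")
    case True
    have Fb: "F b \<noteq> 0" "degree (F b) = b - a"
      using Suc.prems(1) True by auto
    then have "coeff (F b) (b - a) \<noteq> 0"
      by (metis leading_coeff_0_iff)
    define e where "e = coeff p (b - a) / lead_coeff (F b)"
    define p' where "p' = p - smult e (F b)"
    have "degree p' \<le> b - a"
      unfolding p'_def using Suc.prems(2) Fb by (intro degree_diff_le) auto
    moreover have "coeff p' (b - a) = 0"
      unfolding p'_def e_def using Fb \<open>coeff (F b) (b - a) \<noteq> 0\<close> by simp
    ultimately have "degree p' < b - a \<or> p' = 0"
      by (metis le_neq_implies_less leading_coeff_0_iff)
    then obtain c where c: "p' = (\<Sum>k\<in>{a..<b}. smult (c k) (F k))"
      using Suc.IH Suc.prems(1) by auto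
    have "(\<Sum>k\<in>{a..<b}. smult ((c(b := e)) k) (F k)) = (\<Sum>k\<in>{a..<b}. smult (c k) (F k))"
      by (intro sum.cong) auto
    then have "p = (\<Sum>k\<in>{a..<b}. smult ((c(b := e)) k) (F k)) + smult ((c(b := e)) b) (F b)"
      using c unfolding p'_def by (simp add: diff_eq_eq)
    also have "\<dots> = (\<Sum>k\<in>{a..<Suc b}. smult ((c(b := e)) k) (F k))"
      using True by simp
    finally show ?thesis
      by blast
  qed (use Suc.prems in \<open>auto intro: exI[of _ "\<lambda>_. 0"]\<close>)
qed (auto intro: exI[of _ "\<lambda>_. 0"])

lemma poly_interpolation_exists:
  fixes v :: "'a::field \<Rightarrow> 'a"
  assumes "finite S"
  shows "\<exists>p. (p = 0 \<or> degree p < card S) \<and> (\<forall>x\<in>S. poly p x = v x)"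
  using assms
proof (induction S rule: finite_induct)
  case (insert x S)
  obtain p where p: "p = 0 \<or> degree p < card S" "\<forall>y\<in>S. poly p y = v y"
    using insert.IH by blast
  define vanish where "vanish = (\<Prod>y\<in>S. [:-y, 1:])"
  have deg: "degree vanish = card S"
    unfolding vanish_def using insert.hyps(1) by (subst degree_prod_eq_sum_degree) auto
  have "poly vanish y = (\<Prod>z\<in>S. y - z)" for y
    unfolding vanish_def by (simp add: poly_prod)
  then have "poly vanish x \<noteq> 0" "\<forall>y\<in>S. poly vanish y = 0"
    using insert.hyps by auto
  define q where "q = p + smult ((v x - poly p x) / poly vanish x) vanish"
  have "degree q \<le> card S"
    unfolding q_def using p(1) deg
    by (intro degree_add_le) (auto intro: order.trans[OF degree_smult_le])
  moreover have "\<forall>y\<in>insert x S. poly q y = v y"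
    unfolding q_def using p(2) \<open>poly vanish x \<noteq> 0\<close> \<open>\<forall>y\<in>S. poly vanish y = 0\<close> by auto
  ultimately show ?case
    using insert.hyps by (intro exI[of _ q]) auto
qed auto

section \<open>Matrices supported on one diagonal\<close>

definition band_mat :: "nat \<Rightarrow> int \<Rightarrow> (real \<Rightarrow> real) \<Rightarrow> rmat" where
  "band_mat n l f = (\<lambda>i j. if i < n \<and> j < n \<and> int j - int i = l then f (real i) else 0)"

lemma band_mat_in_gl: "band_mat n l f \<in> gl n"
  by (auto simp: band_mat_def gl_def)

lemma mid_eq_band_mat: "mid n = band_mat n 0 (\<lambda>_. 1)"
  by (auto simp: mid_def band_mat_def fun_eq_iff)

lemma band_mat_eqD:
  assumes "band_mat n l f = band_mat n l g" "i < n" "0 \<le> int i + l" "int i + l < int n"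
  shows "f (real i) = g (real i)"
proof -
  define j where "j = nat (int i + l)"
  have "j < n" "int j - int i = l"
    using assms unfolding j_def by auto
  then show ?thesis
    using fun_cong[OF fun_cong[OF assms(1), of i], of j] assms(2) by (simp add: band_mat_def)
qed

lemma mmult_Xmat_band_mat:
  assumes "0 \<le> l"
  shows "mmult n (Xmat n) (band_mat n l f) =
         band_mat n (l + 1) (\<lambda>x. (x + 1) * (real n - x - 1) * f (x + 1))"
proof (intro ext)
  fix i j
  have "mmult n (Xmat n) (band_mat n l f) i j =
        (\<Sum>t<n. if t = i + 1 then real (i + 1) * (real n - real (i + 1)) * band_mat n l f t j else 0)"
    unfolding mmult_def by (intro sum.cong) (auto simp: Xmat_def band_mat_def)
  then show "mmult n (Xmat n) (band_mat n l f) i j =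
             band_mat n (l + 1) (\<lambda>x. (x + 1) * (real n - x - 1) * f (x + 1)) i j"
    using assms by (auto simp: band_mat_def algebra_simps)
qed

lemma mmult_Ymat_band_mat_apply:
  "mmult n (Ymat n) (band_mat n l f) i j = (if 1 \<le> i \<and> i < n then band_mat n l f (i - 1) j else 0)"
proof -
  have "mmult n (Ymat n) (band_mat n l f) i j =
        (\<Sum>t<n. if t = i - 1 then (if 1 \<le> i \<and> i < n then band_mat n l f t j else 0) else 0)"
    unfolding mmult_def by (intro sum.cong) (auto simp: Ymat_def band_mat_def)
  then show ?thesis
    by auto
qed

lemma mmult_band_mat_Ymat_apply:
  "mmult n (band_mat n l f) (Ymat n) i j = (if j + 1 < n then band_mat n l f i (j + 1) else 0)"
proof -
  have "mmult n (band_mat n l f) (Ymat n) i j =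
        (\<Sum>t<n. if t = j + 1 then (if j + 1 < n then band_mat n l f i t else 0) else 0)"
    unfolding mmult_def by (intro sum.cong) (auto simp: Ymat_def band_mat_def)
  then show ?thesis
    by simp
qed

lemma ad_Ymat_band_mat:
  assumes "1 \<le> l \<Longrightarrow> f (-1) = 0" and "1 \<le> l \<Longrightarrow> f (real n - of_int l) = 0"
  shows "ad n (Ymat n) (band_mat n l f) = band_mat n (l - 1) (\<lambda>x. f (x - 1) - f x)"
proof (intro ext)
  fix i j
  show "ad n (Ymat n) (band_mat n l f) i j = band_mat n (l - 1) (\<lambda>x. f (x - 1) - f x) i j"
  proof (cases "i < n \<and> j < n \<and> int j - int i = l - 1")
    case True
    have "(if 1 \<le> i \<and> i < n then band_mat n l f (i - 1) j else 0) = f (real i - 1)"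
    proof (cases "i = 0")
      case False
      then show ?thesis using True by (auto simp: band_mat_def)
    qed (use True assms(1) in \<open>auto simp: band_mat_def\<close>)
    moreover have "(if j + 1 < n then band_mat n l f i (j + 1) else 0) = f (real i)"
    proof (cases "j + 1 < n")
      case False
      then have "1 \<le> l" "real i = real n - of_int l" using True by linarith+
      then show ?thesis using False assms(2) by auto
    qed (use True in \<open>auto simp: band_mat_def\<close>)
    ultimately show ?thesis
      unfolding ad_def mmult_Ymat_band_mat_apply mmult_band_mat_Ymat_apply
      using True by (simp add: band_mat_def)
  next
    case False
    then show ?thesis
      unfolding ad_def mmult_Ymat_band_mat_apply mmult_band_mat_Ymat_apply by (auto simp: band_mat_def)
  qed
qed

lemma mmult_band_mat_polyH:
  "mmult n (band_mat n l g) (polyH n f) =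
   band_mat n l (\<lambda>x. g x * poly f (real n - 2 * (x + of_int l) - 1))"
proof (intro ext)
  fix i j
  have "mmult n (band_mat n l g) (polyH n f) i j =
        (\<Sum>t<n. if t = j then (if j < n then band_mat n l g i t * poly f (alpha n (j + 1)) else 0) else 0)"
    unfolding mmult_def polyH_def funH_def by (intro sum.cong) auto
  also have "\<dots> = (if j < n then band_mat n l g i j * poly f (alpha n (j + 1)) else 0)"
    by simp
  also have "\<dots> = band_mat n l (\<lambda>x. g x * poly f (real n - 2 * (x + of_int l) - 1)) i j"
  proof (cases "i < n \<and> j < n \<and> int j - int i = l")
    case True
    then have "real j = real i + of_int l"
      by (metis of_int_of_nat_eq of_int_add add_diff_cancel_left' diff_add_cancel)
    then have "alpha n (j + 1) = real n - 2 * (real i + of_int l) - 1"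
      by (simp add: alpha_def)
    then show ?thesis using True by (simp add: band_mat_def)
  qed (auto simp: band_mat_def)
  finally show "mmult n (band_mat n l g) (polyH n f) i j =
                band_mat n l (\<lambda>x. g x * poly f (real n - 2 * (x + of_int l) - 1)) i j" .
qed

section \<open>The diagonals of powers of X and Y\<close>

definition xpow_poly :: "nat \<Rightarrow> nat \<Rightarrow> real poly" where
  "xpow_poly n k = (\<Prod>s = 1..k. [:real s, 1:] * [:real n - real s, -1:])"

lemma poly_xpow_poly: "poly (xpow_poly n k) x = (\<Prod>s = 1..k. (x + real s) * (real n - x - real s))"
  by (simp add: xpow_poly_def poly_prod algebra_simps)

lemma poly_xpow_poly_Suc:
  "poly (xpow_poly n (Suc k)) x = poly (xpow_poly n k) x * ((x + real (Suc k)) * (real n - x - real (Suc k)))"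
  by (simp add: poly_xpow_poly)

lemma poly_xpow_poly_Suc_shift:
  "poly (xpow_poly n (Suc k)) x = (x + 1) * (real n - x - 1) * poly (xpow_poly n k) (x + 1)"
proof -
  have "(\<Prod>s = 1..Suc k. (x + real s) * (real n - x - real s)) =
        (x + 1) * (real n - x - 1) * (\<Prod>s = Suc 1..Suc k. (x + real s) * (real n - x - real s))"
    by (subst prod.atLeast_Suc_atMost) simp_all
  also have "(\<Prod>s = Suc 1..Suc k. (x + real s) * (real n - x - real s)) =
             (\<Prod>s = 1..k. (x + 1 + real s) * (real n - (x + 1) - real s))"
    unfolding prod.shift_bounds_cl_Suc_ivl by (simp add: algebra_simps)
  finally show ?thesis
    by (simp only: poly_xpow_poly)
qed

lemma poly_xpow_poly_roots:
  assumes "1 \<le> s" "s \<le> k"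
  shows "poly (xpow_poly n k) (- real s) = 0" "poly (xpow_poly n k) (real n - real s) = 0"
  using assms by (auto simp: poly_xpow_poly)

lemma poly_xpow_poly_nonzero: "i + k < n \<Longrightarrow> poly (xpow_poly n k) (real i) \<noteq> 0"
  by (auto simp: poly_xpow_poly)

lemma degree_xpow_poly: "xpow_poly n k \<noteq> 0 \<and> degree (xpow_poly n k) = 2 * k"
proof -
  have factor: "[:real s, 1:] * [:real n - real s, -1:] \<noteq> 0 \<and>
                degree ([:real s, 1:] * [:real n - real s, -1 :: real:]) = 2" for s
    by (simp add: degree_mult_eq)
  then show ?thesis
    unfolding xpow_poly_def by (simp add: degree_prod_eq_sum_degree)
qed

lemma mpow_Xmat: "mpow n (Xmat n) k = band_mat n (int k) (poly (xpow_poly n k))"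
proof (induction k)
  case 0
  show ?case by (simp add: mpow_def mid_eq_band_mat xpow_poly_def)
next
  case (Suc k)
  have "mpow n (Xmat n) (Suc k) = mmult n (Xmat n) (mpow n (Xmat n) k)"
    by (simp add: mpow_def)
  also have "\<dots> = band_mat n (int (Suc k)) (poly (xpow_poly n (Suc k)))"
    unfolding Suc.IH mmult_Xmat_band_mat[OF of_nat_0_le_iff] poly_xpow_poly_Suc_shift
    by (simp add: add.commute)
  finally show ?case .
qed

definition adpow_poly :: "nat \<Rightarrow> nat \<Rightarrow> nat \<Rightarrow> real poly" where
  "adpow_poly n k j = (fdiff (-1) ^^ j) (xpow_poly n k)"

lemma poly_adpow_poly_Suc:
  "poly (adpow_poly n k (Suc j)) x = poly (adpow_poly n k j) (x - 1) - poly (adpow_poly n k j) x"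
  by (simp add: adpow_poly_def poly_fdiff)

lemma poly_adpow_poly_roots:
  assumes "1 \<le> s" "s + j \<le> k"
  shows "poly (adpow_poly n k j) (- real s) = 0 \<and> poly (adpow_poly n k j) (real n - real s) = 0"
  using assms
proof (induction j arbitrary: s)
  case 0
  then show ?case by (simp add: adpow_poly_def poly_xpow_poly_roots)
next
  case (Suc j)
  have shift: "- real s - 1 = - real (Suc s)" "real n - real s - 1 = real n - real (Suc s)"
    by simp_all
  have "poly (adpow_poly n k j) (- real s) = 0 \<and> poly (adpow_poly n k j) (real n - real s) = 0"
       "poly (adpow_poly n k j) (- real (Suc s)) = 0 \<and> poly (adpow_poly n k j) (real n - real (Suc s)) = 0"
    by (rule Suc.IH; use Suc.prems in simp)+
  then show ?case
    unfolding poly_adpow_poly_Suc shift by simp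
qed

lemma adpow_Ymat_mpow_Xmat:
  "(ad n (Ymat n) ^^ j) (mpow n (Xmat n) k) = band_mat n (int k - int j) (poly (adpow_poly n k j))"
proof (induction j)
  case 0
  then show ?case by (simp add: mpow_Xmat adpow_poly_def)
next
  case (Suc j)
  have "(ad n (Ymat n) ^^ Suc j) (mpow n (Xmat n) k) =
        band_mat n (int k - int j - 1) (\<lambda>x. poly (adpow_poly n k j) (x - 1) - poly (adpow_poly n k j) x)"
    unfolding funpow.simps comp_apply Suc.IH
  proof (rule ad_Ymat_band_mat)
    assume "1 \<le> int k - int j"
    then show "poly (adpow_poly n k j) (- 1) = 0"
      and "poly (adpow_poly n k j) (real n - of_int (int k - int j)) = 0"
      using poly_adpow_poly_roots[of 1 j k n] poly_adpow_poly_roots[of "k - j" j k n]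
      by simp_all
  qed
  also have "(\<lambda>x. poly (adpow_poly n k j) (x - 1) - poly (adpow_poly n k j) x) = poly (adpow_poly n k (Suc j))"
    by (simp add: fun_eq_iff poly_adpow_poly_Suc)
  finally show ?case
    by (simp add: algebra_simps)
qed

lemma ekl_eq_band_mat: "l \<le> int k \<Longrightarrow> ekl n k l = band_mat n l (poly (adpow_poly n k (nat (int k - l))))"
  by (simp add: ekl_def adpow_Ymat_mpow_Xmat)

lemma degree_adpow_poly: "j \<le> 2 * k \<Longrightarrow> adpow_poly n k j \<noteq> 0 \<and> degree (adpow_poly n k j) = 2 * k - j"
  using degree_fdiff_funpow[of "-1" "xpow_poly n k" j] degree_xpow_poly[of n k]
  by (simp add: adpow_poly_def)

lemma adpow_poly_eq_0: "2 * k < j \<Longrightarrow> adpow_poly n k j = 0"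
  using fdiff_funpow_eq_0[of "xpow_poly n k" j] degree_xpow_poly[of n k]
  by (simp add: adpow_poly_def)

text \<open>Dividing \<open>adpow_poly n k (m + 1)\<close>, the backward difference of
  \<open>xpow_poly n (k - m) \<cdot> cofactor_poly n k m\<close>, by \<open>xpow_poly n (k - m - 1)\<close> gives the recurrence.\<close>

primrec cofactor_poly :: "nat \<Rightarrow> nat \<Rightarrow> nat \<Rightarrow> real poly" where
  "cofactor_poly n k 0 = 1"
| "cofactor_poly n k (Suc m) = [:0, real n, -1:] * (cofactor_poly n k m \<circ>\<^sub>p [:-1, 1:])
     - [:real (k - m), 1:] * [:real n - real (k - m), -1:] * cofactor_poly n k m"

lemma poly_cofactor_poly_Suc:
  "poly (cofactor_poly n k (Suc m)) x = x * (real n - x) * poly (cofactor_poly n k m) (x - 1)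
     - (x + real (k - m)) * (real n - x - real (k - m)) * poly (cofactor_poly n k m) x"
  by (simp add: poly_pcompose algebra_simps)

declare cofactor_poly.simps(2) [simp del]

lemma adpow_poly_factor: "m \<le> k \<Longrightarrow> adpow_poly n k m = xpow_poly n (k - m) * cofactor_poly n k m"
proof (induction m)
  case 0
  then show ?case by (simp add: adpow_poly_def)
next
  case (Suc m)
  define L where "L = k - Suc m"
  have L: "k - m = Suc L"
    using Suc.prems unfolding L_def by simp
  show ?case
  proof (rule poly_ext)
    fix x
    have shifted: "poly (xpow_poly n (k - m)) (x - 1) = x * (real n - x) * poly (xpow_poly n L) x"
      unfolding L poly_xpow_poly_Suc_shift by (simp add: algebra_simps)
    have "poly (adpow_poly n k (Suc m)) x =
          poly (xpow_poly n (k - m)) (x - 1) * poly (cofactor_poly n k m) (x - 1)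
          - poly (xpow_poly n (k - m)) x * poly (cofactor_poly n k m) x"
      using Suc by (simp add: poly_adpow_poly_Suc)
    also have "\<dots> = poly (xpow_poly n L) x * poly (cofactor_poly n k (Suc m)) x"
      unfolding shifted unfolding poly_cofactor_poly_Suc L poly_xpow_poly_Suc by (simp add: algebra_simps)
    finally show "poly (adpow_poly n k (Suc m)) x = poly (xpow_poly n (k - Suc m) * cofactor_poly n k (Suc m)) x"
      by (simp add: L_def)
  qed
qed

lemma degree_cofactor_poly:
  assumes "m \<le> k"
  shows "cofactor_poly n k m \<noteq> 0 \<and> degree (cofactor_poly n k m) = m"
proof -
  have "adpow_poly n k m \<noteq> 0" "degree (adpow_poly n k m) = 2 * k - m"
    using degree_adpow_poly[of m k n] assms by auto
  moreover have "xpow_poly n (k - m) \<noteq> 0" "degree (xpow_poly n (k - m)) = 2 * (k - m)"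
    using degree_xpow_poly by auto
  ultimately show ?thesis
    using adpow_poly_factor[OF assms, of n] assms by (auto simp: degree_mult_eq)
qed

section \<open>Orthogonality for the trace form\<close>

lemma mmult_assoc: "mmult n (mmult n A B) C = mmult n A (mmult n B C)"
proof (intro ext)
  fix i j
  have "mmult n (mmult n A B) C i j = (\<Sum>s<n. \<Sum>t<n. A i t * B t s * C s j)"
    unfolding mmult_def by (simp add: sum_distrib_right)
  also have "\<dots> = (\<Sum>t<n. \<Sum>s<n. A i t * B t s * C s j)"
    by (rule sum.swap)
  also have "\<dots> = mmult n A (mmult n B C) i j"
    unfolding mmult_def by (simp add: sum_distrib_left mult.assoc)
  finally show "mmult n (mmult n A B) C i j = mmult n A (mmult n B C) i j" .
qed

lemma mtrace_mmult_commute: "mtrace n (mmult n A B) = mtrace n (mmult n B A)"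
  unfolding mtrace_def mmult_def by (subst sum.swap) (simp add: mult.commute)

lemma trform_commute: "trform n A B = trform n B A"
  unfolding trform_def by (rule mtrace_mmult_commute)

lemma trform_diff_left: "trform n (\<lambda>i j. P i j - Q i j) B = trform n P B - trform n Q B"
  unfolding trform_def mtrace_def mmult_def by (simp add: left_diff_distrib sum_subtractf)

lemma trform_diff_right: "trform n B (\<lambda>i j. P i j - Q i j) = trform n B P - trform n B Q"
  unfolding trform_def mtrace_def mmult_def by (simp add: right_diff_distrib sum_subtractf)

lemma trform_ad_left: "trform n (ad n Z A) B = - trform n A (ad n Z B)"
proof -
  have "trform n (mmult n Z A) B = trform n A (mmult n B Z)"
    unfolding trform_def
    by (metis mmult_assoc mtrace_mmult_commute)
  moreover have "trform n (mmult n A Z) B = trform n A (mmult n Z B)"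
    unfolding trform_def by (simp add: mmult_assoc)
  ultimately show ?thesis
    unfolding ad_def trform_diff_left trform_diff_right by simp
qed

lemma trform_adpow_left: "trform n ((ad n Z ^^ a) A) B = (-1) ^ a * trform n A ((ad n Z ^^ a) B)"
proof (induction a arbitrary: B)
  case (Suc a)
  have "trform n ((ad n Z ^^ Suc a) A) B = - trform n ((ad n Z ^^ a) A) (ad n Z B)"
    by (simp add: trform_ad_left)
  also have "\<dots> = (-1) ^ Suc a * trform n A ((ad n Z ^^ a) (ad n Z B))"
    by (simp add: Suc.IH)
  finally show ?case
    by (simp add: funpow_Suc_right del: funpow.simps)
qed simp

lemma trform_band_mat_eq_0: "l + l' \<noteq> 0 \<Longrightarrow> trform n (band_mat n l f) (band_mat n l' g) = 0"
  unfolding trform_def mtrace_def mmult_def band_mat_def by (intro sum.neutral ballI) auto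

lemma trform_ekl_eq_0_less:
  assumes "k' < k" "l \<le> int k" "- int k' \<le> l'" "l' \<le> int k'" "l + l' = 0"
  shows "trform n (ekl n k l) (ekl n k' l') = 0"
proof -
  define a where "a = nat (int k - l)"
  define b where "b = nat (int k' - l')"
  have "trform n (ekl n k l) (ekl n k' l') =
        (-1) ^ a * trform n (mpow n (Xmat n) k) ((ad n (Ymat n) ^^ (a + b)) (mpow n (Xmat n) k'))"
    unfolding ekl_def a_def b_def trform_adpow_left by (simp add: funpow_add)
  also have "(ad n (Ymat n) ^^ (a + b)) (mpow n (Xmat n) k') = (\<lambda>i j. 0)"
  proof -
    have "2 * k' < a + b"
      using assms unfolding a_def b_def by linarith
    then show ?thesis
      by (simp add: adpow_Ymat_mpow_Xmat adpow_poly_eq_0 band_mat_def fun_eq_iff)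
  qed
  finally show ?thesis
    by (simp add: trform_def mtrace_def mmult_def)
qed

lemma trform_ekl_eq_0:
  assumes "- int k \<le> l" "l \<le> int k" "- int k' \<le> l'" "l' \<le> int k'" "\<not> (k = k' \<and> l + l' = 0)"
  shows "trform n (ekl n k l) (ekl n k' l') = 0"
proof (cases "l + l' = 0")
  case False
  then show ?thesis
    using assms by (simp add: ekl_eq_band_mat trform_band_mat_eq_0)
next
  case True
  with assms have "k' < k \<or> k < k'"
    by auto
  then show ?thesis
    using trform_ekl_eq_0_less[of k' k l l' n] trform_ekl_eq_0_less[of k k' l' l n] assms True
    by (auto simp: trform_commute)
qed

section \<open>The basis of gl(n)\<close>

definition ekl_index :: "nat \<Rightarrow> (nat \<times> int) set" where
  "ekl_index n = {(k, l). k < n \<and> - int k \<le> l \<and> l \<le> int k}"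

definition ekl_weight :: "nat \<Rightarrow> int \<Rightarrow> real \<Rightarrow> real" where
  "ekl_weight n l x = (if 0 \<le> l then poly (xpow_poly n (nat l)) x else 1)"

definition ekl_cofactor :: "nat \<Rightarrow> nat \<Rightarrow> int \<Rightarrow> real poly" where
  "ekl_cofactor n k l =
     (if 0 \<le> l then cofactor_poly n k (nat (int k - l)) else adpow_poly n k (nat (int k - l)))"

definition diag_rows :: "nat \<Rightarrow> int \<Rightarrow> nat set" where
  "diag_rows n l = {i. i < n \<and> 0 \<le> int i + l \<and> int i + l < int n}"

definition diag_lincomb :: "nat \<Rightarrow> (nat \<times> int \<Rightarrow> real) \<Rightarrow> int \<Rightarrow> real poly" where
  "diag_lincomb n c l = (\<Sum>k\<in>{nat \<bar>l\<bar>..<n}. smult (c (k, l)) (ekl_cofactor n k l))"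

lemma finite_ekl_index: "finite (ekl_index n)"
proof (rule finite_subset)
  show "ekl_index n \<subseteq> {..<n} \<times> {- int n..int n}"
    unfolding ekl_index_def by auto
qed auto

lemma ekl_eq_weighted_band_mat:
  assumes "- int k \<le> l" "l \<le> int k"
  shows "ekl n k l = band_mat n l (\<lambda>x. ekl_weight n l x * poly (ekl_cofactor n k l) x)"
proof (cases "0 \<le> l")
  case True
  then have "poly (adpow_poly n k (nat (int k - l))) = (\<lambda>x. ekl_weight n l x * poly (ekl_cofactor n k l) x)"
    using assms by (simp add: fun_eq_iff adpow_poly_factor ekl_weight_def ekl_cofactor_def nat_diff_distrib')
  then show ?thesis
    using assms by (simp add: ekl_eq_band_mat)
next
  case False
  then show ?thesis
    using assms by (simp add: ekl_eq_band_mat ekl_weight_def ekl_cofactor_def)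
qed

lemma degree_ekl_cofactor:
  assumes "- int k \<le> l" "l \<le> int k"
  shows "ekl_cofactor n k l \<noteq> 0 \<and> degree (ekl_cofactor n k l) = k - nat \<bar>l\<bar>"
proof (cases "0 \<le> l")
  case True
  then show ?thesis
    using degree_cofactor_poly[of "nat (int k - l)" k n] assms by (simp add: ekl_cofactor_def)
next
  case False
  then have "nat (int k - l) \<le> 2 * k" "2 * k - nat (int k - l) = k - nat \<bar>l\<bar>"
    using assms by linarith+
  then show ?thesis
    using degree_adpow_poly[of "nat (int k - l)" k n] False by (simp add: ekl_cofactor_def)
qed

lemma ekl_cofactor_graded:
  "\<forall>k\<in>{nat \<bar>l\<bar>..<n}. ekl_cofactor n k l \<noteq> 0 \<and> degree (ekl_cofactor n k l) = k - nat \<bar>l\<bar>"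
  using degree_ekl_cofactor by auto

lemma degree_diag_lincomb: "degree (diag_lincomb n c l) < n - nat \<bar>l\<bar> \<or> diag_lincomb n c l = 0"
proof (cases "nat \<bar>l\<bar> < n")
  case True
  have "degree (diag_lincomb n c l) \<le> n - nat \<bar>l\<bar> - 1"
    unfolding diag_lincomb_def using ekl_cofactor_graded[of l n]
    by (intro degree_sum_le) (auto intro: order.trans[OF degree_smult_le])
  then show ?thesis
    using True by linarith
qed (simp add: diag_lincomb_def)

lemma ekl_weight_nonzero: "i \<in> diag_rows n l \<Longrightarrow> ekl_weight n l (real i) \<noteq> 0"
  unfolding ekl_weight_def diag_rows_def by (auto intro!: poly_xpow_poly_nonzero)

lemma card_diag_rows: "\<bar>l\<bar> < int n \<Longrightarrow> card (real ` diag_rows n l) = n - nat \<bar>l\<bar>"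
proof -
  assume "\<bar>l\<bar> < int n"
  moreover have "diag_rows n l = {nat (- l)..<min n (nat (int n - l))}"
    unfolding diag_rows_def by auto
  ultimately show ?thesis
    by (simp add: card_image)
qed

lemma lincomb_ekl_entry:
  assumes "i < n" "j < n"
  shows "(\<Sum>p\<in>ekl_index n. c p * ekl n (fst p) (snd p) i j) =
         ekl_weight n (int j - int i) (real i) * poly (diag_lincomb n c (int j - int i)) (real i)"
proof -
  define l where "l = int j - int i"
  have diag: "(\<lambda>k. (k, l)) ` {nat \<bar>l\<bar>..<n} = {p \<in> ekl_index n. snd p = l}"
    using assms unfolding ekl_index_def l_def by (auto simp: image_iff)
  have "(\<Sum>p\<in>ekl_index n. c p * ekl n (fst p) (snd p) i j) =
        (\<Sum>p\<in>{p \<in> ekl_index n. snd p = l}. c p * ekl n (fst p) (snd p) i j)"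
    using finite_ekl_index
    by (intro sum.mono_neutral_right) (auto simp: ekl_index_def l_def ekl_eq_band_mat band_mat_def split: if_splits)
  also have "\<dots> = (\<Sum>k\<in>{nat \<bar>l\<bar>..<n}. c (k, l) * ekl n k l i j)"
    unfolding diag[symmetric] by (subst sum.reindex) (auto simp: inj_on_def)
  also have "\<dots> = (\<Sum>k\<in>{nat \<bar>l\<bar>..<n}. ekl_weight n l (real i) * (c (k, l) * poly (ekl_cofactor n k l) (real i)))"
    using assms by (intro sum.cong) (auto simp: ekl_eq_weighted_band_mat band_mat_def l_def)
  finally show ?thesis
    unfolding diag_lincomb_def l_def by (simp add: poly_sum sum_distrib_left)
qed

lemma ekl_in_gl: "l \<le> int k \<Longrightarrow> ekl n k l \<in> gl n"
  by (simp add: ekl_eq_band_mat band_mat_in_gl)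

lemma ekl_independent:
  assumes "(\<lambda>i j. \<Sum>p\<in>ekl_index n. c p * ekl n (fst p) (snd p) i j) = (\<lambda>i j. 0)"
    and "p \<in> ekl_index n"
  shows "c p = 0"
proof -
  obtain k l where p: "p = (k, l)" "k < n" "- int k \<le> l" "l \<le> int k"
    using assms(2) by (auto simp: ekl_index_def)
  have "poly (diag_lincomb n c l) x = poly 0 x" if x: "x \<in> real ` diag_rows n l" for x
  proof -
    obtain i where i: "i \<in> diag_rows n l" "x = real i"
      using x by blast
    define j where "j = nat (int i + l)"
    have "i < n" "j < n" "int j - int i = l"
      using i unfolding diag_rows_def j_def by auto
    then have "ekl_weight n l (real i) * poly (diag_lincomb n c l) (real i) = 0"
      using lincomb_ekl_entry[of i n j c] fun_cong[OF fun_cong[OF assms(1), of i], of j] by simp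
    then show ?thesis
      using ekl_weight_nonzero[OF i(1)] i(2) by simp
  qed
  moreover have "card (real ` diag_rows n l) = n - nat \<bar>l\<bar>" "nat \<bar>l\<bar> < n"
    using card_diag_rows[of l n] p by auto
  ultimately have "diag_lincomb n c l = 0"
    using degree_diag_lincomb[of n c l] by (intro poly_eqI_degree[where A = "real ` diag_rows n l"]) auto
  then show ?thesis
    using graded_family_independent[OF ekl_cofactor_graded, of "\<lambda>k. c (k, l)"] p
    by (auto simp: diag_lincomb_def)
qed

lemma diag_lincomb_interpolates:
  assumes "\<bar>l\<bar> < int n"
  shows "\<exists>c. \<forall>i\<in>diag_rows n l. poly (diag_lincomb n c l) (real i) = v (real i)"
proof -
  obtain q where q: "q = 0 \<or> degree q < card (real ` diag_rows n l)" "\<forall>x\<in>real ` diag_rows n l. poly q x = v x"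
    using poly_interpolation_exists[of "real ` diag_rows n l" v] by (auto simp: diag_rows_def)
  then have "degree q < n - nat \<bar>l\<bar> \<or> q = 0"
    using card_diag_rows[OF assms] by auto
  then obtain c where "q = (\<Sum>k\<in>{nat \<bar>l\<bar>..<n}. smult (c k) (ekl_cofactor n k l))"
    using graded_family_spans[OF ekl_cofactor_graded[of l n]] by blast
  then have "diag_lincomb n (\<lambda>p. c (fst p)) l = q"
    by (simp add: diag_lincomb_def)
  then show ?thesis
    using q(2) by blast
qed

lemma gl_in_span_ekl:
  assumes "A \<in> gl n"
  shows "\<exists>c. A = (\<lambda>i j. \<Sum>p\<in>ekl_index n. c p * ekl n (fst p) (snd p) i j)"
proof -
  define v where "v l x = A (nat \<lfloor>x\<rfloor>) (nat (\<lfloor>x\<rfloor> + l)) / ekl_weight n l x" for l x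
  have "\<forall>l. \<exists>c. \<bar>l\<bar> < int n \<longrightarrow> (\<forall>i\<in>diag_rows n l. poly (diag_lincomb n c l) (real i) = v l (real i))"
    using diag_lincomb_interpolates by blast
  then obtain C where C: "\<forall>l. \<bar>l\<bar> < int n \<longrightarrow> (\<forall>i\<in>diag_rows n l. poly (diag_lincomb n (C l) l) (real i) = v l (real i))"
    by metis
  define c where "c p = C (snd p) p" for p
  have "A i j = (\<Sum>p\<in>ekl_index n. c p * ekl n (fst p) (snd p) i j)" for i j
  proof (cases "i < n \<and> j < n")
    case True
    define l where "l = int j - int i"
    have "\<bar>l\<bar> < int n" "i \<in> diag_rows n l"
      using True unfolding l_def diag_rows_def by auto
    moreover have "diag_lincomb n c l = diag_lincomb n (C l) l"
      by (simp add: diag_lincomb_def c_def)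
    ultimately show ?thesis
      using lincomb_ekl_entry[of i n j c] True C ekl_weight_nonzero[of i n l]
      by (simp add: v_def l_def)
  next
    case False
    then show ?thesis
      using assms by (auto simp: gl_def ekl_index_def ekl_eq_band_mat band_mat_def intro!: sum.neutral)
  qed
  then show ?thesis
    by blast
qed

section \<open>The polynomials f_kl and their orthogonality\<close>

text \<open>The substitution \<open>x \<mapsto> (n - 2 l - 1 - x) / 2\<close> sends \<open>alpha n (i + l + 1)\<close> to the
  0-based row index \<open>i\<close>.\<close>

definition f_poly :: "nat \<Rightarrow> nat \<Rightarrow> nat \<Rightarrow> real poly" where
  "f_poly n k l = cofactor_poly n k (k - l) \<circ>\<^sub>p [:(real n - 2 * real l - 1) / 2, - 1 / 2:]"

lemma poly_f_poly: "poly (f_poly n k l) x = poly (cofactor_poly n k (k - l)) ((real n - 2 * real l - 1 - x) / 2)"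
  unfolding f_poly_def poly_pcompose
  by (rule arg_cong[where f = "poly (cofactor_poly n k (k - l))"]) (simp add: field_simps)

lemma poly_f_poly_row: "poly (f_poly n k l) (real n - 2 * (x + real l) - 1) = poly (cofactor_poly n k (k - l)) x"
  unfolding poly_f_poly
  by (rule arg_cong[where f = "poly (cofactor_poly n k (k - l))"]) (simp add: field_simps)

lemma degree_f_poly:
  assumes "l \<le> k"
  shows "f_poly n k l \<noteq> 0 \<and> degree (f_poly n k l) = k - l"
proof -
  have "cofactor_poly n k (k - l) \<noteq> 0" "degree (cofactor_poly n k (k - l)) = k - l"
    using degree_cofactor_poly[of "k - l" k n] by auto
  then show ?thesis
    unfolding f_poly_def by (auto simp: degree_pcompose dest: pcompose_eq_0)
qed

lemma mmult_mpow_Xmat_polyH: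
  "mmult n (mpow n (Xmat n) l) (polyH n f) =
   band_mat n (int l) (\<lambda>x. poly (xpow_poly n l) x * poly f (real n - 2 * (x + real l) - 1))"
  by (simp add: mpow_Xmat mmult_band_mat_polyH)

lemma fkl_eq_f_poly:
  assumes "l \<le> k" "k < n"
  shows "fkl n k l = f_poly n k l"
proof -
  have ekl: "ekl n k (int l) = mmult n (mpow n (Xmat n) l) (polyH n (f_poly n k l))"
    unfolding mmult_mpow_Xmat_polyH poly_f_poly_row using assms
    by (simp add: ekl_eq_weighted_band_mat ekl_weight_def ekl_cofactor_def nat_diff_distrib')
  have "f = f_poly n k l" if f: "degree f < n - l" "ekl n k (int l) = mmult n (mpow n (Xmat n) l) (polyH n f)" for f
  proof (rule poly_eqI_degree)
    fix x
    assume "x \<in> (\<lambda>i. real n - 2 * (real i + real l) - 1) ` {..<n - l}"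
    then obtain i where i: "i < n - l" "x = real n - 2 * (real i + real l) - 1"
      by blast
    have "band_mat n (int l) (\<lambda>x. poly (xpow_poly n l) x * poly f (real n - 2 * (x + real l) - 1)) =
          band_mat n (int l) (\<lambda>x. poly (xpow_poly n l) x * poly (f_poly n k l) (real n - 2 * (x + real l) - 1))"
      using f(2) ekl by (simp add: mmult_mpow_Xmat_polyH)
    from band_mat_eqD[OF this, of i] i show "poly f x = poly (f_poly n k l) x"
      using poly_xpow_poly_nonzero[of i l n] by simp
  next
    have "card ((\<lambda>i. real n - 2 * (real i + real l) - 1) ` {..<n - l}) = n - l"
      by (subst card_image) (auto simp: inj_on_def)
    then show "degree f < card ((\<lambda>i. real n - 2 * (real i + real l) - 1) ` {..<n - l})"
         "degree (f_poly n k l) < card ((\<lambda>i. real n - 2 * (real i + real l) - 1) ` {..<n - l})"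
      using f(1) degree_f_poly[OF assms(1), of n] assms by auto
  qed
  then show ?thesis
    unfolding fkl_def using ekl degree_f_poly[OF assms(1), of n] assms by (intro the_equality) auto
qed

lemma prod_Tfun_eq_xpow_poly:
  "(\<Prod>j = 1..l. Tfun n j (real n - 2 * (x + real l) - 1)) = poly (xpow_poly n l) x"
proof (induction l arbitrary: x)
  case (Suc l)
  have "(\<Prod>j = 1..Suc l. Tfun n j (real n - 2 * (x + real (Suc l)) - 1)) =
        (\<Prod>j = 1..l. Tfun n j (real n - 2 * ((x + 1) + real l) - 1)) * Tfun n (Suc l) (real n - 2 * (x + real (Suc l)) - 1)"
    by (simp add: algebra_simps)
  also have "\<dots> = (x + 1) * (real n - x - 1) * poly (xpow_poly n l) (x + 1)"
    unfolding Suc.IH by (simp add: Tfun_def field_simps power2_eq_square)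
  finally show ?case
    by (simp add: poly_xpow_poly_Suc_shift)
qed (simp add: xpow_poly_def)

lemma lform_commute: "lform n l f g = lform n l g f"
  unfolding lform_def by (simp add: ac_simps)

lemma lform_fkl_eq_sum:
  assumes "l \<le> k" "k < n" "l \<le> k'" "k' < n"
  shows "lform n l (fkl n k l) (fkl n k' l) =
         (\<Sum>r<n - l. poly (adpow_poly n k (k - l)) (real r) * poly (cofactor_poly n k' (k' - l)) (real r))"
proof -
  have "lform n l (fkl n k l) (fkl n k' l) =
        (\<Sum>r<n - l. poly (f_poly n k l) (alpha n (r + l + 1)) * poly (f_poly n k' l) (alpha n (r + l + 1)) *
                    (\<Prod>j = 1..l. Tfun n j (alpha n (r + l + 1))))"
    unfolding lform_def fkl_eq_f_poly[OF assms(1,2)] fkl_eq_f_poly[OF assms(3,4)]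
    by (rule sum.reindex_bij_witness[of _ "\<lambda>r. r + l + 1" "\<lambda>i. i - l - 1"]) auto
  also have "\<dots> = (\<Sum>r<n - l. poly (adpow_poly n k (k - l)) (real r) * poly (cofactor_poly n k' (k' - l)) (real r))"
  proof (intro sum.cong refl)
    fix r
    have alpha: "alpha n (r + l + 1) = real n - 2 * (real r + real l) - 1"
      by (simp add: alpha_def)
    show "poly (f_poly n k l) (alpha n (r + l + 1)) * poly (f_poly n k' l) (alpha n (r + l + 1)) *
               (\<Prod>j = 1..l. Tfun n j (alpha n (r + l + 1))) =
               poly (adpow_poly n k (k - l)) (real r) * poly (cofactor_poly n k' (k' - l)) (real r)"
      unfolding alpha poly_f_poly_row prod_Tfun_eq_xpow_poly using assms by (simp add: adpow_poly_factor)
  qed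
  finally show ?thesis .
qed

lemma sum_backward_diff_by_parts:
  fixes p q :: "real \<Rightarrow> real"
  assumes "p (-1) = 0" "p (real N) = 0"
  shows "(\<Sum>r<Suc N. (p (real r - 1) - p (real r)) * q (real r)) =
         (\<Sum>r<N. p (real r) * (q (real r + 1) - q (real r)))"
proof -
  have "(\<Sum>r<Suc N. p (real r - 1) * q (real r)) = (\<Sum>r<N. p (real r) * q (real r + 1))"
    by (subst sum.lessThan_Suc_shift) (simp add: assms(1) add.commute)
  moreover have "(\<Sum>r<Suc N. p (real r) * q (real r)) = (\<Sum>r<N. p (real r) * q (real r))"
    using assms(2) by simp
  ultimately show ?thesis
    by (simp add: left_diff_distrib right_diff_distrib sum_subtractf)
qed

lemma sum_adpow_poly_by_parts:
  assumes "j \<le> k" "k \<le> n"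
  shows "(\<Sum>r<n - k + j. poly (adpow_poly n k j) (real r) * poly q (real r)) =
         (\<Sum>r<n - k. poly (xpow_poly n k) (real r) * poly ((fdiff 1 ^^ j) q) (real r))"
  using assms(1)
proof (induction j arbitrary: q)
  case 0
  then show ?case by (simp add: adpow_poly_def)
next
  case (Suc j)
  define N where "N = n - k + j"
  have "n - k + Suc j = Suc N"
    using assms unfolding N_def by simp
  then have "(\<Sum>r<n - k + Suc j. poly (adpow_poly n k (Suc j)) (real r) * poly q (real r)) =
             (\<Sum>r<Suc N. (poly (adpow_poly n k j) (real r - 1) - poly (adpow_poly n k j) (real r)) * poly q (real r))"
    by (simp only: poly_adpow_poly_Suc)
  also have "\<dots> = (\<Sum>r<N. poly (adpow_poly n k j) (real r) * (poly q (real r + 1) - poly q (real r)))"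
  proof (rule sum_backward_diff_by_parts)
    show "poly (adpow_poly n k j) (-1) = 0"
      using poly_adpow_poly_roots[of 1 j k n] Suc.prems by simp
    have "real N = real n - real (k - j)"
      using Suc.prems assms(2) by (simp add: N_def)
    then show "poly (adpow_poly n k j) (real N) = 0"
      using Suc.prems by (simp only:) (rule conjunct2[OF poly_adpow_poly_roots], auto)
  qed
  also have "\<dots> = (\<Sum>r<N. poly (adpow_poly n k j) (real r) * poly (fdiff 1 q) (real r))"
    by (simp add: poly_fdiff)
  also have "\<dots> = (\<Sum>r<n - k. poly (xpow_poly n k) (real r) * poly ((fdiff 1 ^^ Suc j) q) (real r))"
    unfolding N_def using Suc by (simp add: funpow_Suc_right del: funpow.simps)
  finally show ?case .
qed

lemma lform_fkl_eq_0_less: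
  assumes "l \<le> k'" "k' < k" "k < n"
  shows "lform n l (fkl n k l) (fkl n k' l) = 0"
proof -
  have "lform n l (fkl n k l) (fkl n k' l) =
        (\<Sum>r<n - k + (k - l). poly (adpow_poly n k (k - l)) (real r) * poly (cofactor_poly n k' (k' - l)) (real r))"
    using assms by (simp add: lform_fkl_eq_sum)
  also have "\<dots> = (\<Sum>r<n - k. poly (xpow_poly n k) (real r) * poly ((fdiff 1 ^^ (k - l)) (cofactor_poly n k' (k' - l))) (real r))"
    using assms by (intro sum_adpow_poly_by_parts) auto
  also have "(fdiff 1 ^^ (k - l)) (cofactor_poly n k' (k' - l)) = 0"
    using degree_cofactor_poly[of "k' - l" k' n] assms by (intro fdiff_funpow_eq_0) auto
  finally show ?thesis
    by simp
qed

lemma lform_fkl_eq_0: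
  assumes "l \<le> k" "l \<le> k'" "k < n" "k' < n" "k \<noteq> k'"
  shows "lform n l (fkl n k l) (fkl n k' l) = 0"
  using assms lform_fkl_eq_0_less[of l k' k n] lform_fkl_eq_0_less[of l k k' n]
  by (cases "k' < k") (auto simp: lform_commute)

section \<open>Hypergeometric form\<close>

text \<open>\<open>hyp_sum n L m u\<close> is the terminating series
  \<open>3F2(-m, 2L + m + 1, u; L + 1, L + 1 - n; 1)\<close>.\<close>

definition hyp_coeff :: "nat \<Rightarrow> nat \<Rightarrow> nat \<Rightarrow> nat \<Rightarrow> real" where
  "hyp_coeff n L m i = pochhammer (- real m) i * pochhammer (2 * real L + real m + 1) i /
     (pochhammer (real L + 1) i * pochhammer (real L + 1 - real n) i) / fact i"

definition hyp_sum :: "nat \<Rightarrow> nat \<Rightarrow> nat \<Rightarrow> real \<Rightarrow> real" where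
  "hyp_sum n L m u = (\<Sum>i\<le>m. hyp_coeff n L m i * pochhammer u i)"

lemma hyp_coeff_0 [simp]: "hyp_coeff n L m 0 = 1"
  by (simp add: hyp_coeff_def)

lemma hyp_coeff_eq_0: "m < i \<Longrightarrow> hyp_coeff n L m i = 0"
  by (simp add: hyp_coeff_def pochhammer_of_nat_eq_0_lemma)

lemma hyp_coeff_Suc:
  "hyp_coeff n L m (Suc i) = hyp_coeff n L m i *
     ((real i - real m) * (2 * real L + real m + 1 + real i) /
      ((real L + 1 + real i) * (real L + 1 - real n + real i) * (real i + 1)))"
proof -
  have "real i - real m = - real m + real i" by simp
  then show ?thesis
    unfolding hyp_coeff_def pochhammer_Suc fact_Suc of_nat_mult of_nat_Suc
    by (simp only: divide_inverse inverse_mult_distrib mult_ac add_ac)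
qed

lemma hyp_coeff_lower:
  assumes "1 \<le> L"
  shows "hyp_coeff n (L - 1) (Suc m) (Suc i) = hyp_coeff n L m i *
           (- (real m + 1) * (2 * real L + real m) / (real L * (real L - real n) * (real i + 1)))"
proof -
  have "real (L - 1) = real L - 1"
    using assms by simp
  then show ?thesis
    unfolding hyp_coeff_def pochhammer_rec fact_Suc
    by (simp add: divide_inverse mult_ac add_ac add_diff_eq)
qed

lemma hyp_coeff_Suc_scaled:
  assumes "i \<le> m" "L + m < n"
  shows "hyp_coeff n L m (Suc i) * ((real (Suc i) + real L) * (real n - real L - real (Suc i))) =
         - hyp_coeff n L m i * (real i - real m) * (2 * real L + real m + 1 + real i) / (real i + 1)"
proof (cases "i = m")
  case False
  define D where "D = (real L + 1 + real i) * (real L + 1 - real n + real i)"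
  have "D \<noteq> 0"
    using False assms unfolding D_def by auto
  then have cancel: "y / (D * e) * - D = - (y / e)" for y e
    by (cases "e = 0") (simp_all add: field_simps)
  have factor: "(real (Suc i) + real L) * (real n - real L - real (Suc i)) = - D"
    unfolding D_def by (simp add: algebra_simps)
  have coeff: "hyp_coeff n L m (Suc i) =
        hyp_coeff n L m i * ((real i - real m) * (2 * real L + real m + 1 + real i) / (D * (real i + 1)))"
    unfolding hyp_coeff_Suc D_def by (simp add: mult.assoc)
  show ?thesis
    unfolding factor coeff mult.assoc cancel by simp
qed (simp add: hyp_coeff_eq_0)

lemma hyp_coeff_lower_scaled:
  assumes "1 \<le> L" "L < n"
  shows "real L * (real n - real L) * hyp_coeff n (L - 1) (Suc m) (Suc i) =
         hyp_coeff n L m i * (real m + 1) * (2 * real L + real m) / (real i + 1)"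
proof -
  define E where "E = real L * (real L - real n)"
  have "E \<noteq> 0"
    using assms unfolding E_def by auto
  then have cancel: "- E * (a * (y / (E * e))) = - (a * y / e)" for a y e
    by (cases "e = 0") (simp_all add: field_simps)
  have factor: "real L * (real n - real L) = - E"
    unfolding E_def by (simp add: algebra_simps)
  show ?thesis
    unfolding hyp_coeff_lower[OF assms(1)] E_def[symmetric] factor cancel
    by (simp add: minus_divide_left algebra_simps)
qed

lemma hyp_coeff_contiguous:
  assumes "1 \<le> L" "L + m < n"
  shows "hyp_coeff n L m i * (2 * real L + real i)
           + hyp_coeff n L m (Suc i) * ((real (Suc i) + real L) * (real n - real L - real (Suc i)))
         = real L * (real n - real L) * hyp_coeff n (L - 1) (Suc m) (Suc i)"
proof (cases "m < i")
  case True
  then show ?thesis by (simp add: hyp_coeff_eq_0)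
next
  case False
  then have "i \<le> m" "L < n"
    using assms by auto
  then show ?thesis
    unfolding hyp_coeff_Suc_scaled[OF \<open>i \<le> m\<close> assms(2)] hyp_coeff_lower_scaled[OF assms(1) \<open>L < n\<close>]
    by (simp add: field_simps)
qed

lemma pochhammer_contiguous:
  fixes u l n :: real
  shows "(u + n - l) * (l - u) * pochhammer u i + u * (u + n) * pochhammer (u + 1) i =
         (2 * l + real i) * pochhammer u (Suc i) + (real i + l) * (n - l - real i) * pochhammer u i"
proof -
  have "u * pochhammer (u + 1) i = pochhammer u i * (u + real i)"
    using pochhammer_rec[of u i] pochhammer_Suc[of u i] by simp
  then have "u * (u + n) * pochhammer (u + 1) i = (u + n) * (pochhammer u i * (u + real i))"
    by (metis mult.assoc mult.commute)
  then show ?thesis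
    by (simp add: pochhammer_Suc algebra_simps)
qed

lemma hyp_sum_contiguous:
  assumes "1 \<le> L" "L + m < n"
  shows "(u + real n - real L) * (real L - u) * hyp_sum n L m u + u * (u + real n) * hyp_sum n L m (u + 1)
         = real L * (real n - real L) * hyp_sum n (L - 1) (Suc m) u"
proof -
  define A where "A = hyp_coeff n L m"
  define g where "g i = A i * (2 * real L + real i) * pochhammer u (Suc i)" for i
  define h where "h i = A i * ((real i + real L) * (real n - real L - real i)) * pochhammer u i" for i
  have "(u + real n - real L) * (real L - u) * hyp_sum n L m u + u * (u + real n) * hyp_sum n L m (u + 1)
        = (\<Sum>i\<le>m. A i * ((u + real n - real L) * (real L - u) * pochhammer u i + u * (u + real n) * pochhammer (u + 1) i))"
    unfolding hyp_sum_def A_def by (simp add: sum_distrib_left sum.distrib[symmetric] algebra_simps)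
  also have "\<dots> = (\<Sum>i\<le>m. g i + h i)"
    unfolding pochhammer_contiguous g_def h_def by (simp add: algebra_simps)
  also have "\<dots> = (\<Sum>i\<le>m. g i) + (\<Sum>i\<le>Suc m. h i)"
    by (simp add: sum.distrib h_def A_def hyp_coeff_eq_0)
  also have "\<dots> = h 0 + (\<Sum>i\<le>m. g i + h (Suc i))"
    by (simp add: sum.atMost_Suc_shift sum.distrib del: sum.atMost_Suc)
  also have "\<dots> = real L * (real n - real L) * (1 + (\<Sum>i\<le>m. hyp_coeff n (L - 1) (Suc m) (Suc i) * pochhammer u (Suc i)))"
  proof -
    have "g i + h (Suc i) = (hyp_coeff n L m i * (2 * real L + real i) + hyp_coeff n L m (Suc i) *
            ((real (Suc i) + real L) * (real n - real L - real (Suc i)))) * pochhammer u (Suc i)" for i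
      unfolding g_def h_def A_def by (simp add: algebra_simps)
    then have "g i + h (Suc i) = real L * (real n - real L) * (hyp_coeff n (L - 1) (Suc m) (Suc i) * pochhammer u (Suc i))" for i
      unfolding hyp_coeff_contiguous[OF assms] by simp
    then show ?thesis
      by (simp add: h_def A_def sum_distrib_left distrib_left)
  qed
  also have "\<dots> = real L * (real n - real L) * hyp_sum n (L - 1) (Suc m) u"
    unfolding hyp_sum_def by (simp add: sum.atMost_Suc_shift del: sum.atMost_Suc)
  finally show ?thesis .
qed

lemma cofactor_poly_eq_hyp_sum:
  assumes "m \<le> k" "k < n"
  shows "\<exists>c. c \<noteq> 0 \<and> (\<forall>x. poly (cofactor_poly n k m) x = c * hyp_sum n (k - m) m (x + real (k - m) + 1 - real n))"
  using assms(1)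
proof (induction m)
  case 0
  show ?case
    by (intro exI[of _ 1]) (simp add: hyp_sum_def)
next
  case (Suc m)
  obtain c where c: "c \<noteq> 0" "\<And>x. poly (cofactor_poly n k m) x = c * hyp_sum n (k - m) m (x + real (k - m) + 1 - real n)"
    using Suc by auto
  define L where "L = k - m"
  have L: "1 \<le> L" "L + m < n" "k - Suc m = L - 1" "real (k - Suc m) = real L - 1"
    using Suc.prems assms unfolding L_def by auto
  have "poly (cofactor_poly n k (Suc m)) x =
        c * (real L * (real n - real L)) * hyp_sum n (k - Suc m) (Suc m) (x + real (k - Suc m) + 1 - real n)" for x
  proof -
    define u where "u = x + real L - real n"
    have "x - 1 + real L + 1 - real n = u" "x + real L + 1 - real n = u + 1"
      unfolding u_def by simp_all
    then have "poly (cofactor_poly n k (Suc m)) x =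
               c * ((u + real n - real L) * (real L - u) * hyp_sum n L m u + u * (u + real n) * hyp_sum n L m (u + 1))"
      unfolding poly_cofactor_poly_Suc c(2) L_def[symmetric] by (simp add: u_def algebra_simps)
    also have "\<dots> = c * (real L * (real n - real L)) * hyp_sum n (L - 1) (Suc m) u"
      unfolding hyp_sum_contiguous[OF L(1,2)] by simp
    finally show ?thesis
      unfolding L(4) unfolding L(3) u_def by simp
  qed
  moreover have "c * (real L * (real n - real L)) \<noteq> 0"
    using c(1) L by auto
  ultimately show ?case
    by blast
qed

lemma hyp3F2_eq_hyp_sum:
  assumes "l \<le> k"
  shows "hyp3F2 (real l - real k) (real l + real k + 1) y (real l + 1) (real l + 1 - real n) 1 = hyp_sum n l (k - l) y"
proof -
  have minus: "real l - real k = - real (k - l)" and plus: "real l + real k + 1 = 2 * real l + real (k - l) + 1"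
    using assms by simp_all
  have "hyp3F2 (real l - real k) (real l + real k + 1) y (real l + 1) (real l + 1 - real n) 1 =
        (\<Sum>i\<le>k - l. pochhammer (- real (k - l)) i * pochhammer (2 * real l + real (k - l) + 1) i * pochhammer y i /
          (pochhammer (real l + 1) i * pochhammer (real l + 1 - real n) i) * 1 ^ i / fact i)"
    unfolding hyp3F2_def minus plus by (rule suminf_finite) (auto simp: pochhammer_of_nat_eq_0_lemma)
  also have "\<dots> = hyp_sum n l (k - l) y"
    unfolding hyp_sum_def hyp_coeff_def by (intro sum.cong refl) (simp add: divide_inverse ac_simps)
  finally show ?thesis .
qed

lemma fkl_hypergeometric:
  assumes "l \<le> k" "k < n"
  shows "\<exists>c. c \<noteq> 0 \<and> polyH n (fkl n k l) =
           (\<lambda>i j. c * funH n (\<lambda>x. hyp3F2 (real l - real k) (real l + real k + 1) ((1 - real n - x) / 2)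
                                        (real l + 1) (real l + 1 - real n) 1) i j)"
proof -
  obtain c where c: "c \<noteq> 0" "\<And>x. poly (cofactor_poly n k (k - l)) x = c * hyp_sum n l (k - l) (x + real l + 1 - real n)"
    using cofactor_poly_eq_hyp_sum[of "k - l" k n] assms by auto
  have "poly (fkl n k l) x = c * hyp3F2 (real l - real k) (real l + real k + 1) ((1 - real n - x) / 2)
                                     (real l + 1) (real l + 1 - real n) 1" for x
  proof -
    have arg: "(real n - 2 * real l - 1 - x) / 2 + real l + 1 - real n = (1 - real n - x) / 2"
      by (simp add: field_simps)
    show ?thesis
      unfolding fkl_eq_f_poly[OF assms] poly_f_poly c(2) arg hyp3F2_eq_hyp_sum[OF assms(1)] ..
  qed
  then show ?thesis
    using c(1) by (intro exI[of _ c]) (auto simp: polyH_def funH_def fun_eq_iff)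
qed

theorem theorem8p1:
  fixes n :: nat
  assumes "1 \<le> n"
  shows
   \<comment> \<open>(i): basis of gl(n) and orthogonality\<close>
   "(\<forall>k l. k < n \<and> - int k \<le> l \<and> l \<le> int k \<longrightarrow> ekl n k l \<in> gl n)
  \<and> (\<forall>c :: nat \<times> int \<Rightarrow> real.
       (\<lambda>i j. \<Sum>p\<in>{(k, l). k < n \<and> - int k \<le> l \<and> l \<le> int k}. c p * ekl n (fst p) (snd p) i j)
         = (\<lambda>i j. 0)
       \<longrightarrow> (\<forall>p\<in>{(k, l). k < n \<and> - int k \<le> l \<and> l \<le> int k}. c p = 0))
  \<and> (\<forall>A\<in>gl n. \<exists>c :: nat \<times> int \<Rightarrow> real.
       A = (\<lambda>i j. \<Sum>p\<in>{(k, l). k < n \<and> - int k \<le> l \<and> l \<le> int k}. c p * ekl n (fst p) (snd p) i j))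
  \<and> (\<forall>k l k' l'. k < n \<and> - int k \<le> l \<and> l \<le> int k \<and> k' < n \<and> - int k' \<le> l' \<and> l' \<le> int k'
       \<and> \<not> (k = k' \<and> l + l' = 0) \<longrightarrow> trform n (ekl n k l) (ekl n k' l') = 0)
   \<comment> \<open>(ii): orthogonal basis of polynomials of degree < n - l w.r.t. <_,_>_l\<close>
  \<and> (\<forall>l < n.
       (\<forall>k\<in>{l..<n}. degree (fkl n k l) < n - l)
     \<and> (\<forall>c :: nat \<Rightarrow> real. (\<Sum>k\<in>{l..<n}. smult (c k) (fkl n k l)) = 0
          \<longrightarrow> (\<forall>k\<in>{l..<n}. c k = 0))
     \<and> (\<forall>p :: real poly. degree p < n - l
          \<longrightarrow> (\<exists>c :: nat \<Rightarrow> real. p = (\<Sum>k\<in>{l..<n}. smult (c k) (fkl n k l))))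
     \<and> (\<forall>k\<in>{l..<n}. \<forall>k'\<in>{l..<n}. k \<noteq> k' \<longrightarrow> lform n l (fkl n k l) (fkl n k' l) = 0))
   \<comment> \<open>(iii): hypergeometric expression up to a nonzero constant\<close>
  \<and> (\<forall>k l. l \<le> k \<and> k < n \<longrightarrow>
       (\<exists>c :: real. c \<noteq> 0 \<and>
          polyH n (fkl n k l) =
          (\<lambda>i j. c * funH n (\<lambda>x. hyp3F2 (real l - real k) (real l + real k + 1) ((1 - real n - x) / 2)
                                        (real l + 1) (real l + 1 - real n) 1) i j)))"
proof -
  have fkl_graded: "\<forall>k\<in>{l..<n}. fkl n k l \<noteq> 0 \<and> degree (fkl n k l) = k - l" for l
    using fkl_eq_f_poly degree_f_poly by auto
  show ?thesis
    unfolding ekl_index_def[symmetric]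
  proof (intro conjI allI impI ballI)
    show "ekl n k l \<in> gl n" if "k < n \<and> - int k \<le> l \<and> l \<le> int k" for k l
      using that by (simp add: ekl_in_gl)
    show "c p = 0" if "(\<lambda>i j. \<Sum>p\<in>ekl_index n. c p * ekl n (fst p) (snd p) i j) = (\<lambda>i j. 0)"
      and "p \<in> ekl_index n" for c p
      using that by (rule ekl_independent)
    show "\<exists>c. A = (\<lambda>i j. \<Sum>p\<in>ekl_index n. c p * ekl n (fst p) (snd p) i j)" if "A \<in> gl n" for A
      using that by (rule gl_in_span_ekl)
    show "trform n (ekl n k l) (ekl n k' l') = 0"
      if "k < n \<and> - int k \<le> l \<and> l \<le> int k \<and> k' < n \<and> - int k' \<le> l' \<and> l' \<le> int k' \<and> \<not> (k = k' \<and> l + l' = 0)"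
      for k l k' l'
      using that by (intro trform_ekl_eq_0) auto
    show "degree (fkl n k l) < n - l" if "l < n" "k \<in> {l..<n}" for l k
      using that fkl_graded[of l] by auto
    show "c k = 0" if "(\<Sum>k\<in>{l..<n}. smult (c k) (fkl n k l)) = 0" "k \<in> {l..<n}" for l c k
      using that graded_family_independent[OF fkl_graded] by blast
    show "\<exists>c. p = (\<Sum>k\<in>{l..<n}. smult (c k) (fkl n k l))" if "degree p < n - l" for l p
      using that graded_family_spans[OF fkl_graded] by blast
    show "lform n l (fkl n k l) (fkl n k' l) = 0" if "l < n" "k \<in> {l..<n}" "k' \<in> {l..<n}" "k \<noteq> k'" for l k k'
      using that by (intro lform_fkl_eq_0) auto
    show "\<exists>c. c \<noteq> 0 \<and> polyH n (fkl n k l) = (\<lambda>i j. c * funH n (\<lambda>x. hyp3F2 (real l - real k)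
            (real l + real k + 1) ((1 - real n - x) / 2) (real l + 1) (real l + 1 - real n) 1) i j)"
      if "l \<le> k \<and> k < n" for k l
      using that by (intro fkl_hypergeometric) auto
  qed
qed

end
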